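(* Let $a, n \in \mathbb{N}$, $d = 2^a$, $\eta = 1/n$, and $j \ge n + a + 1$. Let $L_1 \subset L_2 \subset \dots \subset L_{n+2}$ be a chain of dyadic intervals with $L_i \in \mathcal{D}_{j-a-i+1}$, and for $i = 1, \dots, n+1$ let $P_i = L_{i+1} \setminus L_i$ be the dyadic brother of $L_i$ in $L_{i+1}$. Let $I_1, \dots, I_{d-1} \in \mathcal{D}_j$ be distinct intervals with $I_i \subset L_1$, and let $J_1, \dots, J_{n+1} \in \mathcal{D}_j$ with $J_i \subset P_i$. For $k = 0, \dots, n$ put $$\mathcal{C}(k) = \{I_1, \dots, I_{d-1}\} \cup \{J_{n-k+1}, \dots, J_{n+1}\}.$$ Then the sequence $\mathcal{C}(0) \subset \mathcal{C}(1) \subset \dots \subset \mathcal{C}(n)$ is increasing and: (A) There exists exactly one, up to permutation of the colours, $(\eta,d)$-homogeneous colouring $\mathcal{C}(0) = \mathcal{C}_1(0) \cup \dots \cup \mathcal{C}_d(0)$. (B) For each $1 \le k \le n-1$: given the $(\eta,d)$-homogeneous colouring $\mathcal{C}(k-1) = \mathcal{C}_1(k-1) \cup \dots \cup \mathcal{C}_d(k-1)$ obtained at stage $k-1$, there exists exactly one $(\eta,d)$-homogeneous colouring $\mathcal{C}(k) = \mathcal{C}_1(k) \cup \dots \cup \mathcal{C}_d(k)$ such that $\mathcal{C}_i(k-1) \subset \mathcal{C}_i(k)$ for all $1 \le i \le d$. (C) Given the $(\eta,d)$-homogeneous colouring $\mathcal{C}(n-1) = \mathcal{C}_1(n-1)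 \cup \dots \cup \mathcal{C}_d(n-1)$ obtained at stage $n-1$, there does not exist an $(\eta,d)$-homogeneous colouring $\mathcal{C}(n) = \mathcal{C}_1(n) \cup \dots \cup \mathcal{C}_d(n)$ such that $\mathcal{C}_i(n-1) \subset \mathcal{C}_i(n)$ for all $1 \le i \le d$.
   Context: $\mathcal{D}$ denotes the collection of dyadic subintervals of $[0,1]$ and $\mathcal{D}_m = \{I \in \mathcal{D} : |I| = 2^{-m}\}$. For a collection $\mathcal{A}$ of dyadic intervals and $L \in \mathcal{D}$, write $\mathcal{A} \cap L = \{I \in \mathcal{A} : I \subset L\}$, and $|\mathcal{A}|$ for its cardinality. A colouring of $\mathcal{A}$ with $d$ colours is a decomposition $\mathcal{A} = \mathcal{A}_1 \cup \dots \cup \mathcal{A}_d$ into pairwise disjoint (possibly empty) subcollections. For $\mathcal{A} \subset \mathcal{D}_j$, $d \in \mathbb{N}$ and $\eta > 0$, such a decomposition is called an $(\eta,d)$-homogeneous colouring if for every $L \in \mathcal{D}$ with $|L| \ge 2^{-j}$ one of the following holds: either $|\mathcal{A} \cap L| > d$ and $\eta \max_{1\le i\le d} |\mathcal{A}_i \cap L| \le \min_{1 \le i \le d} |\mathcal{A}_i \cap L|$; or $|\mathcal{A} \cap L| \le d$ and $|\mathcal{A}_i \cap L| \le 1$ for each $1 \le i \le d$. "Up to permutation" means up to relabelling the colours $1,\dots,d$. *)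

theory Defs
  imports Complex_Main
begin

text \<open>A dyadic subinterval of [0,1] of length 2^(-m) with left endpoint k 2^(-m)
  is encoded as the pair (m, k) with k < 2^m.\<close>

type_synonym dyadic = "nat \<times> nat"

definition dyadic_intervals :: "dyadic set" where
  "dyadic_intervals = {(m, k). k < 2 ^ m}"

definition Dlev :: "nat \<Rightarrow> dyadic set" where
  "Dlev m = {(m', k). m' = m \<and> k < 2 ^ m}"

text \<open>Containment I \<subseteq> L of dyadic intervals.\<close>
definition dsub :: "dyadic \<Rightarrow> dyadic \<Rightarrow> bool" where
  "dsub I L \<longleftrightarrow> fst L \<le> fst I \<and> snd I div 2 ^ (fst I - fst L) = snd L"

definition brother :: "dyadic \<Rightarrow> dyadic" where
  "brother I = (fst I, if even (snd I) then snd I + 1 else snd I - 1)"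

definition restr :: "dyadic set \<Rightarrow> dyadic \<Rightarrow> dyadic set" where
  "restr A L = {I \<in> A. dsub I L}"

definition colouring :: "nat \<Rightarrow> dyadic set \<Rightarrow> (nat \<Rightarrow> dyadic set) \<Rightarrow> bool" where
  "colouring d A C \<longleftrightarrow> (\<Union>i\<in>{1..d}. C i) = A \<and>
     (\<forall>i\<in>{1..d}. \<forall>i'\<in>{1..d}. i \<noteq> i' \<longrightarrow> C i \<inter> C i' = {})"

definition homogeneous :: "real \<Rightarrow> nat \<Rightarrow> nat \<Rightarrow> dyadic set \<Rightarrow> (nat \<Rightarrow> dyadic set) \<Rightarrow> bool" where
  "homogeneous \<eta> d j A C \<longleftrightarrow> A \<subseteq> Dlev j \<and> colouring d A C \<and>
     (\<forall>L\<in>dyadic_intervals. fst L \<le> j \<longrightarrow>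
        (card (restr A L) > d \<and>
           \<eta> * Max ((\<lambda>i. real (card (restr (C i) L))) ` {1..d})
             \<le> Min ((\<lambda>i. real (card (restr (C i) L))) ` {1..d}))
      \<or> (card (restr A L) \<le> d \<and> (\<forall>i\<in>{1..d}. card (restr (C i) L) \<le> 1)))"

definition perm_equiv :: "nat \<Rightarrow> (nat \<Rightarrow> dyadic set) \<Rightarrow> (nat \<Rightarrow> dyadic set) \<Rightarrow> bool" where
  "perm_equiv d C C' \<longleftrightarrow> (\<exists>\<sigma>. bij_betw \<sigma> {1..d} {1..d} \<and> (\<forall>i\<in>{1..d}. C' i = C (\<sigma> i)))"

definition extends_col :: "nat \<Rightarrow> (nat \<Rightarrow> dyadic set) \<Rightarrow> (nat \<Rightarrow> dyadic set) \<Rightarrow> bool" where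
  "extends_col d C C' \<longleftrightarrow> (\<forall>i\<in>{1..d}. C i \<subseteq> C' i)"

definition stage_chain :: "real \<Rightarrow> nat \<Rightarrow> nat \<Rightarrow> (nat \<Rightarrow> dyadic set)
    \<Rightarrow> (nat \<Rightarrow> nat \<Rightarrow> dyadic set) \<Rightarrow> nat \<Rightarrow> bool" where
  "stage_chain \<eta> d j Cc Cs k \<longleftrightarrow> homogeneous \<eta> d j (Cc 0) (Cs 0) \<and>
     (\<forall>m\<in>{1..k}. homogeneous \<eta> d j (Cc m) (Cs m) \<and> extends_col d (Cs (m - 1)) (Cs m))"

end

theory Submission
  imports Defs
begin

text \<open>C(0) has exactly d members, all inside the root interval, so homogeneity there
  makes every colour a single interval. From then on every stage is forced into the same
  shape: one colour holds all the J's, each other colour a single I. Indeed, the newcomer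
  J (n - k + 1) lies in L (n - k + 2) together with all the I's, and that interval contains
  only d members of C(k), so no singleton colour may take it. Such a colouring is
  homogeneous while the J-colour has at most n = 1/\<eta> members: an interval not containing
  L 1 meets at most one J, and one containing L 1 sees colour sizes between 1 and n. At
  stage n the J-colour has n + 1 members, and the root then violates
  \<eta> max \<le> min against any singleton colour.\<close>

section \<open>Dyadic intervals\<close>

lemma dsub_refl: "dsub I I"
  by (simp add: dsub_def)

lemma dsub_trans: "dsub I K \<Longrightarrow> dsub K L \<Longrightarrow> dsub I L"
proof -
  assume "dsub I K" "dsub K L"
  then have lev: "fst L \<le> fst K" "fst K \<le> fst I"
    and idx: "snd I div 2 ^ (fst I - fst K) = snd K" "snd K div 2 ^ (fst K - fst L) = snd L"
    by (auto simp: dsub_def)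
  have "fst I - fst L = (fst I - fst K) + (fst K - fst L)"
    using lev by simp
  then have "snd I div 2 ^ (fst I - fst L) = snd I div 2 ^ (fst I - fst K) div 2 ^ (fst K - fst L)"
    by (simp add: power_add div_mult2_eq)
  then show "dsub I L"
    using lev idx by (simp add: dsub_def)
qed

lemma dsub_if_common_dsub:
  assumes "dsub I L" "dsub I K" "fst L \<le> fst K"
  shows "dsub K L"
proof -
  have lev: "fst L \<le> fst I" "fst K \<le> fst I"
    and idx: "snd I div 2 ^ (fst I - fst L) = snd L" "snd I div 2 ^ (fst I - fst K) = snd K"
    using assms by (auto simp: dsub_def)
  have "fst I - fst L = (fst I - fst K) + (fst K - fst L)"
    using lev assms(3) by simp
  then have "snd I div 2 ^ (fst I - fst L) = snd I div 2 ^ (fst I - fst K) div 2 ^ (fst K - fst L)"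
    by (simp add: power_add div_mult2_eq)
  then show ?thesis
    using idx assms(3) by (simp add: dsub_def)
qed

lemma dsub_same_level_eq: "dsub I L \<Longrightarrow> fst I = fst L \<Longrightarrow> I = L"
  by (simp add: dsub_def prod_eq_iff)

lemma brother_neq: "brother I \<noteq> I"
  by (cases "even (snd I)") (auto simp: brother_def prod_eq_iff elim: oddE)

lemma dsub_brother_disjoint: "dsub K I \<Longrightarrow> \<not> dsub K (brother I)"
  using dsub_if_common_dsub[of K I "brother I"] dsub_same_level_eq[of "brother I" I] brother_neq[of I]
  by (auto simp: brother_def)

lemma dsub_brother_parent:
  assumes "dsub I L" "fst I = fst L + 1"
  shows "dsub (brother I) L"
proof -
  have "(if even (snd I) then snd I + 1 else snd I - 1) div 2 = snd I div 2"
    by (cases "even (snd I)") (auto elim!: evenE oddE)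
  then show ?thesis
    using assms by (simp add: dsub_def brother_def)
qed

lemma root_dyadic: "(0, 0) \<in> dyadic_intervals"
  by (simp add: dyadic_intervals_def)

lemma restr_root: "A \<subseteq> Dlev j \<Longrightarrow> restr A (0, 0) = A"
  by (auto simp: restr_def dsub_def Dlev_def)

section \<open>Colourings\<close>

lemma colouring_subset: "colouring d A C \<Longrightarrow> i \<in> {1..d} \<Longrightarrow> C i \<subseteq> A"
  by (auto simp: colouring_def)

lemma colouring_disjoint:
  "colouring d A C \<Longrightarrow> i \<in> {1..d} \<Longrightarrow> i' \<in> {1..d} \<Longrightarrow> i \<noteq> i' \<Longrightarrow> C i \<inter> C i' = {}"
  by (auto simp: colouring_def)

lemma colouring_restr: "colouring d A C \<Longrightarrow> colouring d (restr A L) (\<lambda>i. restr (C i) L)"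
  unfolding colouring_def restr_def by blast

lemma card_colouring:
  assumes "finite A" "colouring d A C"
  shows "card A = (\<Sum>i\<in>{1..d}. card (C i))"
proof -
  have "A = (\<Union>i\<in>{1..d}. C i)"
    using assms(2) by (simp add: colouring_def)
  moreover have "finite (C i)" if "i \<in> {1..d}" for i
    using colouring_subset[OF assms(2) that] assms(1) by (rule finite_subset)
  ultimately show ?thesis
    using colouring_disjoint[OF assms(2)] by (simp add: card_UN_disjoint)
qed

lemma card_restr_colouring:
  assumes "finite A" "colouring d A C"
  shows "card (restr A L) = (\<Sum>i\<in>{1..d}. card (restr (C i) L))"
proof -
  have "finite (restr A L)"
    using assms(1) by (simp add: restr_def)
  then show ?thesis
    using card_colouring colouring_restr[OF assms(2)] by blast
qed

lemma colouring_insert: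
  assumes "colouring d A C" "x \<notin> A" "c \<in> {1..d}"
  shows "colouring d (insert x A) (C(c := insert x (C c)))"
  using assms colouring_subset[OF assms(1)] unfolding colouring_def by auto

lemma colouring_insert_unique:
  assumes C: "colouring d A C" and C': "colouring d (insert x A) C'"
    and ext: "extends_col d C C'" and x: "x \<notin> A" "c \<in> {1..d}" "x \<in> C' c"
    and i: "i \<in> {1..d}"
  shows "C' i = (C(c := insert x (C c))) i"
proof -
  have "C' i \<subseteq> C i \<union> {x}"
  proof
    fix y assume y: "y \<in> C' i"
    show "y \<in> C i \<union> {x}"
    proof (cases "y = x")
      case False
      then have "y \<in> A"
        using colouring_subset[OF C' i] y by blast
      then obtain k where k: "k \<in> {1..d}" "y \<in> C k"
        using C by (auto simp: colouring_def)
      moreover have "y \<in> C' k"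
        using ext k by (auto simp: extends_col_def)
      ultimately have "k = i"
        using y colouring_disjoint[OF C' i] by blast
      then show ?thesis
        using k by simp
    qed simp
  qed
  moreover have "C i \<subseteq> C' i"
    using ext i by (simp add: extends_col_def)
  moreover have "x \<in> C' i \<longleftrightarrow> i = c"
    using colouring_disjoint[OF C' i x(2)] x(3) by blast
  moreover have "x \<notin> C i"
    using colouring_subset[OF C i] x(1) by blast
  ultimately show ?thesis
    by auto
qed

lemma colouring_singletons:
  assumes "finite A" "colouring d A C" "card A = d" "\<forall>i\<in>{1..d}. card (C i) \<le> 1"
    and i: "i \<in> {1..d}"
  shows "\<exists>x. C i = {x}"
proof -
  have "card (C i) = 1"
  proof (rule ccontr)
    assume "card (C i) \<noteq> 1"
    then have "card (C i) = 0"
      using assms(4) i by fastforce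
    have "d = (\<Sum>k\<in>{1..d}. card (C k))"
      using card_colouring[OF assms(1,2)] assms(3) by simp
    also have "\<dots> = (\<Sum>k\<in>{1..d} - {i}. card (C k))"
      using i \<open>card (C i) = 0\<close> by (simp add: sum.remove)
    also have "\<dots> \<le> (\<Sum>k\<in>{1..d} - {i}. 1)"
      using assms(4) by (intro sum_mono) auto
    also have "\<dots> = d - 1"
      using i by simp
    finally show False
      using i by simp
  qed
  then show ?thesis
    by (simp add: card_1_singleton_iff)
qed

lemma perm_equiv_singleton_colourings:
  assumes C: "colouring d A C" and C': "colouring d A C'"
    and sg: "\<forall>i\<in>{1..d}. \<exists>x. C i = {x}" and sg': "\<forall>i\<in>{1..d}. \<exists>x. C' i = {x}"
  shows "perm_equiv d C C'"
proof -
  have "\<exists>k\<in>{1..d}. C k = C' i" if i: "i \<in> {1..d}" for i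
  proof -
    obtain x where x: "C' i = {x}"
      using sg' i by blast
    then have "x \<in> A"
      using colouring_subset[OF C' i] by blast
    then obtain k where k: "k \<in> {1..d}" "x \<in> C k"
      using C by (auto simp: colouring_def)
    then show ?thesis
      using sg x by fastforce
  qed
  then obtain \<sigma> where \<sigma>: "\<And>i. i \<in> {1..d} \<Longrightarrow> \<sigma> i \<in> {1..d} \<and> C (\<sigma> i) = C' i"
    by metis
  have "inj_on \<sigma> {1..d}"
  proof (rule inj_onI)
    fix i i' assume "i \<in> {1..d}" "i' \<in> {1..d}" "\<sigma> i = \<sigma> i'"
    then show "i = i'"
      using \<sigma> sg' colouring_disjoint[OF C'] by (metis inf.idem singleton_insert_inj_eq' insert_not_empty)
  qed
  moreover have "\<sigma> ` {1..d} \<subseteq> {1..d}"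
    using \<sigma> by blast
  ultimately have "bij_betw \<sigma> {1..d} {1..d}"
    by (simp add: bij_betw_def endo_inj_surj)
  then show ?thesis
    unfolding perm_equiv_def using \<sigma> by metis
qed

section \<open>Homogeneity at a single interval\<close>

definition homogeneous_at :: "real \<Rightarrow> nat \<Rightarrow> dyadic set \<Rightarrow> (nat \<Rightarrow> dyadic set) \<Rightarrow> dyadic \<Rightarrow> bool" where
  "homogeneous_at \<eta> d A C L \<longleftrightarrow>
     (card (restr A L) > d \<and>
        \<eta> * Max ((\<lambda>i. real (card (restr (C i) L))) ` {1..d})
          \<le> Min ((\<lambda>i. real (card (restr (C i) L))) ` {1..d}))
   \<or> (card (restr A L) \<le> d \<and> (\<forall>i\<in>{1..d}. card (restr (C i) L) \<le> 1))"

lemma homogeneous_iff: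
  "homogeneous \<eta> d j A C \<longleftrightarrow> A \<subseteq> Dlev j \<and> colouring d A C \<and>
     (\<forall>L\<in>dyadic_intervals. fst L \<le> j \<longrightarrow> homogeneous_at \<eta> d A C L)"
  by (simp add: homogeneous_def homogeneous_at_def)

lemma homogeneous_at_small:
  "homogeneous_at \<eta> d A C L \<Longrightarrow> card (restr A L) \<le> d \<Longrightarrow> i \<in> {1..d} \<Longrightarrow> card (restr (C i) L) \<le> 1"
  by (auto simp: homogeneous_at_def)

lemma homogeneous_at_if_le_one:
  assumes "finite A" "colouring d A C" "\<forall>i\<in>{1..d}. card (restr (C i) L) \<le> 1"
  shows "homogeneous_at \<eta> d A C L"
proof -
  have "card (restr A L) = (\<Sum>i\<in>{1..d}. card (restr (C i) L))"
    using card_restr_colouring[OF assms(1,2)] .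
  also have "\<dots> \<le> (\<Sum>i\<in>{1..d}. 1)"
    using assms(3) by (intro sum_mono) auto
  finally show ?thesis
    using assms(3) by (simp add: homogeneous_at_def)
qed

lemma homogeneous_at_if_balanced:
  fixes \<eta> :: real
  assumes "1 \<le> d" "d < card (restr A L)"
    and "\<And>i. i \<in> {1..d} \<Longrightarrow> 1 \<le> card (restr (C i) L) \<and> \<eta> * card (restr (C i) L) \<le> 1"
  shows "homogeneous_at \<eta> d A C L"
proof -
  let ?V = "(\<lambda>i. real (card (restr (C i) L))) ` {1..d}"
  have V: "finite ?V" "?V \<noteq> {}"
    using assms(1) by auto
  have "\<eta> * Max ?V \<le> 1"
    using Max_in[OF V] assms(3) by force
  moreover have "1 \<le> Min ?V"
    using V assms(3) by (simp add: Min_ge_iff)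
  ultimately show ?thesis
    using assms(2) by (simp add: homogeneous_at_def)
qed

lemma not_homogeneous_at:
  fixes \<eta> :: real
  assumes "d < card (restr A L)" "0 \<le> \<eta>" "i \<in> {1..d}" "i' \<in> {1..d}"
    and "card (restr (C i') L) < \<eta> * card (restr (C i) L)"
  shows "\<not> homogeneous_at \<eta> d A C L"
proof -
  let ?V = "(\<lambda>i. real (card (restr (C i) L))) ` {1..d}"
  have "\<eta> * card (restr (C i) L) \<le> \<eta> * Max ?V"
    using assms(2,3) by (intro mult_left_mono Max_ge) auto
  moreover have "Min ?V \<le> card (restr (C i') L)"
    using assms(4) by (intro Min_le) auto
  ultimately show ?thesis
    using assms(1,5) by (auto simp: homogeneous_at_def)
qed

section \<open>The staircase configuration\<close>

locale staircase =
  fixes a n j d :: nat and L I J :: "nat \<Rightarrow> dyadic"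
  assumes d_ge_2: "d \<ge> 2" and n_ge_1: "n \<ge> 1" and j_ge: "j \<ge> n + a + 1"
    and L_level: "\<forall>i\<in>{1..n + 2}. L i \<in> Dlev (j + 1 - a - i)"
    and L_dsub_L: "\<forall>i\<in>{1..n + 1}. dsub (L i) (L (i + 1))"
    and I_inj: "inj_on I {1..d - 1}"
    and I_in_L1: "\<forall>i\<in>{1..d - 1}. I i \<in> Dlev j \<and> dsub (I i) (L 1)"
    and J_in_brother: "\<forall>i\<in>{1..n + 1}. J i \<in> Dlev j \<and> dsub (J i) (brother (L i))"
begin

definition stage :: "nat \<Rightarrow> dyadic set" where
  "stage k = I ` {1..d - 1} \<union> J ` {n - k + 1..n + 1}"

lemma L_dyadic:
  assumes "i \<in> {1..n + 2}"
  shows "L i \<in> dyadic_intervals" "fst (L i) = j + 1 - a - i"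
proof -
  have "L i \<in> Dlev (j + 1 - a - i)"
    using L_level assms by blast
  then show "L i \<in> dyadic_intervals" "fst (L i) = j + 1 - a - i"
    by (cases "L i"; simp add: Dlev_def dyadic_intervals_def)+
qed

lemma L_mono:
  assumes "1 \<le> i" "i \<le> i'" "i' \<le> n + 2"
  shows "dsub (L i) (L i')"
  using assms(2,3)
proof (induction i' rule: dec_induct)
  case base
  show ?case by (rule dsub_refl)
next
  case (step m)
  then show ?case
    using assms(1) L_dsub_L dsub_trans[of "L i" "L m" "L (Suc m)"] by simp
qed

lemma brother_L_dsub: "i \<in> {1..n + 1} \<Longrightarrow> dsub (brother (L i)) (L (i + 1))"
  using L_dsub_L L_dyadic(2)[of i] L_dyadic(2)[of "i + 1"] j_ge by (intro dsub_brother_parent) auto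

lemma I_dsub_L: "p \<in> {1..d - 1} \<Longrightarrow> m \<in> {1..n + 2} \<Longrightarrow> dsub (I p) (L m)"
  using I_in_L1 L_mono[of 1 m] dsub_trans by fastforce

lemma J_dsub_L: "i \<in> {1..n + 1} \<Longrightarrow> i < m \<Longrightarrow> m \<le> n + 2 \<Longrightarrow> dsub (J i) (L m)"
  using J_in_brother brother_L_dsub L_mono[of "i + 1" m] dsub_trans by (metis Suc_eq_plus1 Suc_leI le_add2)

lemma J_not_dsub_L: "i \<in> {1..n + 1} \<Longrightarrow> 1 \<le> m \<Longrightarrow> m \<le> i \<Longrightarrow> \<not> dsub (J i) (L m)"
  using J_in_brother L_mono[of m i] dsub_trans dsub_brother_disjoint by fastforce

lemma J_notin_I: "i \<in> {1..n + 1} \<Longrightarrow> J i \<notin> I ` {1..d - 1}"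
  using J_not_dsub_L[of i i] I_dsub_L[of _ i] by auto

lemma J_inj: "inj_on J {1..n + 1}"
proof (rule inj_onI)
  fix i i' assume "i \<in> {1..n + 1}" "i' \<in> {1..n + 1}" "J i = J i'"
  moreover have False if "i < i'" "i \<in> {1..n + 1}" "i' \<in> {1..n + 1}" "J i = J i'" for i i'
    using J_dsub_L[of i i'] J_not_dsub_L[of i' i'] that by auto
  ultimately show "i = i'"
    by (metis linorder_neqE_nat)
qed

lemma card_I: "card (I ` {1..d - 1}) = d - 1"
  using I_inj by (simp add: card_image)

lemma finite_stage [simp]: "finite (stage k)"
  by (simp add: stage_def)

lemma stage_Dlev: "stage k \<subseteq> Dlev j"
  using I_in_L1 J_in_brother by (auto simp: stage_def)

text \<open>Of two members of K, the one with the larger index lies in L i' for the smaller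
  index i', so K is either above L i', hence above L 1, or inside L i', which misses J i'.\<close>
lemma only_J_in:
  assumes "x \<in> stage n" "i \<in> {1..n + 1}" "dsub (J i) K" "dsub x K" "\<not> dsub (L 1) K"
  shows "x = J i"
proof -
  have below: False if "i' \<in> {1..n + 1}" "dsub y (L i')" "dsub y K" "dsub (J i') K" for i' y
  proof (cases "fst K \<le> fst (L i')")
    case True
    then have "dsub (L i') K"
      by (rule dsub_if_common_dsub[OF that(3,2)])
    then show False
      using assms(5) L_mono[of 1 i'] that(1) dsub_trans by auto
  next
    case False
    then have "dsub K (L i')"
      using dsub_if_common_dsub[OF that(2,3)] by simp
    then show False
      using J_not_dsub_L[of i' i'] that(1,4) dsub_trans by auto
  qed
  show ?thesis
  proof (rule ccontr)
    assume "x \<noteq> J i"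
    from assms(1) consider p where "p \<in> {1..d - 1}" "x = I p" | q where "q \<in> {1..n + 1}" "x = J q"
      by (auto simp: stage_def)
    then show False
    proof cases
      case 1
      then show False
        using below[of i x] I_dsub_L[of p i] assms by simp
    next
      case 2
      with \<open>x \<noteq> J i\<close> consider "q < i" | "i < q"
        by (metis linorder_neqE_nat)
      then show False
        using below[of i x] below[of q "J i"] J_dsub_L[of q i] J_dsub_L[of i q] assms 2 by auto
    qed
  qed
qed

lemma stage_subset_last: "stage m \<subseteq> stage n"
  by (auto simp: stage_def)

lemma stage_mono: "k \<in> {1..n} \<Longrightarrow> stage (k - 1) \<subseteq> stage k"
  by (auto simp: stage_def)

lemma J_range_step: "m \<in> {1..n} \<Longrightarrow> {n - m + 1..n + 1} = insert (n - m + 1) {n - (m - 1) + 1..n + 1}"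
  by auto

lemma stage_step:
  assumes "m \<in> {1..n}"
  shows "stage m = insert (J (n - m + 1)) (stage (m - 1))" "J (n - m + 1) \<notin> stage (m - 1)"
proof -
  show "stage m = insert (J (n - m + 1)) (stage (m - 1))"
    using J_range_step[OF assms] by (auto simp: stage_def)
  have "J (n - m + 1) \<notin> J ` {n - (m - 1) + 1..n + 1}"
    using assms inj_on_image_mem_iff[OF J_inj, of "n - m + 1" "{n - (m - 1) + 1..n + 1}"] by auto
  then show "J (n - m + 1) \<notin> stage (m - 1)"
    using J_notin_I[of "n - m + 1"] assms by (auto simp: stage_def)
qed

text \<open>The colouring every stage is forced into.\<close>
definition canonical :: "nat \<Rightarrow> (nat \<Rightarrow> dyadic set) \<Rightarrow> nat \<Rightarrow> bool" where
  "canonical m C c \<longleftrightarrow> colouring d (stage m) C \<and> c \<in> {1..d} \<and> C c = J ` {n - m + 1..n + 1} \<and>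
     (\<forall>i\<in>{1..d} - {c}. \<exists>p\<in>{1..d - 1}. C i = {I p})"

lemma canonicalD:
  assumes "canonical m C c"
  shows "colouring d (stage m) C" "c \<in> {1..d}" "C c = J ` {n - m + 1..n + 1}"
    and "i \<in> {1..d} - {c} \<Longrightarrow> \<exists>p\<in>{1..d - 1}. C i = {I p}"
  using assms by (auto simp: canonical_def)

lemma canonical_cong: "canonical m C c \<Longrightarrow> \<forall>i\<in>{1..d}. C' i = C i \<Longrightarrow> canonical m C' c"
  by (simp add: canonical_def colouring_def)

lemma canonical_insert:
  assumes m: "m \<in> {1..n}" and can: "canonical (m - 1) C c"
  shows "canonical m (C(c := insert (J (n - m + 1)) (C c))) c"
proof -
  from colouring_insert[OF canonicalD(1)[OF can] stage_step(2)[OF m] canonicalD(2)[OF can]]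
  have "colouring d (stage m) (C(c := insert (J (n - m + 1)) (C c)))"
    by (simp only: stage_step(1)[OF m])
  moreover have "insert (J (n - m + 1)) (J ` {n - (m - 1) + 1..n + 1}) = J ` {n - m + 1..n + 1}"
    by (simp only: J_range_step[OF m] image_insert)
  ultimately show ?thesis
    using can by (simp add: canonical_def)
qed

lemma canonical_restr_other_le_one:
  "canonical m C c \<Longrightarrow> i \<in> {1..d} - {c} \<Longrightarrow> card (restr (C i) K) \<le> 1"
  using canonicalD(4)[of m C c i] by (auto simp: restr_def card_le_Suc0_iff_eq)

lemma canonical_restr_other_above_L1:
  assumes can: "canonical m C c" and K: "dsub (L 1) K" and i: "i \<in> {1..d} - {c}"
  shows "card (restr (C i) K) = 1"
proof -
  obtain p where p: "p \<in> {1..d - 1}" "C i = {I p}"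
    using canonicalD(4)[OF can i] by blast
  then have "dsub (I p) K"
    using I_dsub_L[of p 1] K dsub_trans by auto
  then have "restr (C i) K = {I p}"
    using p by (auto simp: restr_def)
  then show ?thesis
    by simp
qed

lemma canonical_restr_J_colour_le: "canonical m C c \<Longrightarrow> card (restr (C c) K) \<le> m + 1"
proof -
  assume can: "canonical m C c"
  have "restr (C c) K \<subseteq> J ` {n - m + 1..n + 1}"
    using canonicalD(3)[OF can] by (auto simp: restr_def)
  then have "card (restr (C c) K) \<le> card (J ` {n - m + 1..n + 1})"
    by (simp add: card_mono)
  also have "\<dots> \<le> m + 1"
    using card_image_le[of "{n - m + 1..n + 1}" J] by simp
  finally show ?thesis .
qed

lemma canonical_homogeneous_at_above_L1:
  fixes \<eta> :: real
  assumes can: "canonical m C c" and m: "m + 1 \<le> n" and \<eta>: "0 \<le> \<eta>" "\<eta> * n \<le> 1"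
    and K: "dsub (L 1) K"
  shows "homogeneous_at \<eta> d (stage m) C K"
proof -
  note col = canonicalD(1)[OF can] and c = canonicalD(2)[OF can]
  note other = canonical_restr_other_above_L1[OF can K]
  define t where "t = card (restr (C c) K)"
  have "t \<le> n"
    using canonical_restr_J_colour_le[OF can, of K] m unfolding t_def by simp
  show ?thesis
  proof (cases "t \<le> 1")
    case True
    then have "\<forall>i\<in>{1..d}. card (restr (C i) K) \<le> 1"
      using other unfolding t_def by (metis DiffI order_refl singletonD)
    then show ?thesis
      using col by (intro homogeneous_at_if_le_one) simp_all
  next
    case False
    have "card (restr (stage m) K) = t + (\<Sum>i\<in>{1..d} - {c}. card (restr (C i) K))"
      using card_restr_colouring[OF _ col] c by (simp add: sum.remove t_def)
    also have "\<dots> = t + (d - 1)"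
      using other c by simp
    finally have "d < card (restr (stage m) K)"
      using False d_ge_2 by simp
    moreover have "1 \<le> card (restr (C i) K) \<and> \<eta> * card (restr (C i) K) \<le> 1" if "i \<in> {1..d}" for i
    proof (cases "i = c")
      case True
      have "\<eta> * t \<le> \<eta> * n"
        using \<open>t \<le> n\<close> \<eta>(1) by (simp add: mult_left_mono)
      then show ?thesis
        using True False \<eta>(2) by (simp add: t_def)
    next
      case False
      have "\<eta> * 1 \<le> \<eta> * n"
        using n_ge_1 \<eta>(1) by (intro mult_left_mono) simp_all
      then show ?thesis
        using other that False \<eta>(2) by simp
    qed
    ultimately show ?thesis
      using d_ge_2 by (intro homogeneous_at_if_balanced) auto
  qed
qed

lemma canonical_homogeneous_at_beside_L1:
  assumes can: "canonical m C c" and K: "\<not> dsub (L 1) K"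
  shows "homogeneous_at \<eta> d (stage m) C K"
proof -
  have "card (restr (C c) K) \<le> 1"
  proof -
    have "x = y" if xy: "x \<in> restr (C c) K" "y \<in> restr (C c) K" for x y
    proof -
      have "x \<in> J ` {n - m + 1..n + 1}"
        using xy(1) canonicalD(3)[OF can] by (simp add: restr_def)
      then obtain q where q: "q \<in> {n - m + 1..n + 1}" "x = J q"
        by blast
      have "y \<in> stage n"
        using xy(2) colouring_subset[OF canonicalD(1,2)[OF can]] stage_subset_last
        by (auto simp: restr_def)
      then show ?thesis
        using only_J_in[OF _ _ _ _ K, of y q] q xy by (simp add: restr_def)
    qed
    moreover have "finite (restr (C c) K)"
      using canonicalD(3)[OF can] by (simp add: restr_def)
    ultimately show ?thesis
      by (simp add: card_le_Suc0_iff_eq)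
  qed
  then have "\<forall>i\<in>{1..d}. card (restr (C i) K) \<le> 1"
    using canonical_restr_other_le_one[OF can] by blast
  then show ?thesis
    using canonicalD(1)[OF can] by (intro homogeneous_at_if_le_one) simp_all
qed

lemma canonical_homogeneous:
  fixes \<eta> :: real
  assumes "canonical m C c" "m + 1 \<le> n" "0 \<le> \<eta>" "\<eta> * n \<le> 1"
  shows "homogeneous \<eta> d j (stage m) C"
proof -
  have "homogeneous_at \<eta> d (stage m) C K" for K
    using canonical_homogeneous_at_above_L1[OF assms] canonical_homogeneous_at_beside_L1[OF assms(1)]
    by (cases "dsub (L 1) K") simp_all
  then show ?thesis
    using stage_Dlev canonicalD(1)[OF assms(1)] by (simp add: homogeneous_iff)
qed

lemma card_stage_n: "card (stage n) = d + n"
proof -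
  have "I ` {1..d - 1} \<inter> J ` {1..n + 1} = {}"
    using J_notin_I by fastforce
  then have "card (stage n) = (d - 1) + (n + 1)"
    using card_I J_inj by (simp add: stage_def card_Un_disjoint card_image)
  then show ?thesis
    using d_ge_2 by simp
qed

lemma canonical_not_homogeneous:
  fixes \<eta> :: real
  assumes can: "canonical n C c" and \<eta>: "1 < \<eta> * (n + 1)"
  shows "\<not> homogeneous \<eta> d j (stage n) C"
proof
  assume hom: "homogeneous \<eta> d j (stage n) C"
  note col = canonicalD(1)[OF can] and c = canonicalD(2)[OF can]
  have root: "restr (C i) (0, 0) = C i" if "i \<in> {1..d}" for i
    using colouring_subset[OF col that] stage_Dlev by (intro restr_root) blast
  have "\<exists>c'. c' \<in> {1..d} - {c}"
    using c d_ge_2 by (cases "c = 1") (auto intro: exI[of _ 1] exI[of _ 2])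
  then obtain c' where c': "c' \<in> {1..d} - {c}"
    by blast
  have "card (C c) = n + 1"
    using canonicalD(3)[OF can] J_inj by (simp add: card_image)
  moreover have "card (C c') = 1"
    using canonicalD(4)[OF can c'] by auto
  ultimately have "card (restr (C c') (0, 0)) < \<eta> * card (restr (C c) (0, 0))"
    using root c c' \<eta> by simp
  moreover have "d < card (restr (stage n) (0, 0))"
    using restr_root[OF stage_Dlev] card_stage_n n_ge_1 by simp
  moreover have "0 < \<eta> * (n + 1)"
    using \<eta> by linarith
  then have "0 \<le> \<eta>"
    by (simp add: zero_less_mult_iff)
  ultimately have "\<not> homogeneous_at \<eta> d (stage n) C (0, 0)"
    using c c' by (intro not_homogeneous_at) auto
  then show False
    using hom root_dyadic by (simp add: homogeneous_iff)
qed

lemma stage_0: "stage 0 = insert (J (n + 1)) (I ` {1..d - 1})"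
  by (auto simp: stage_def)

lemma card_stage_0: "card (stage 0) = d"
  using stage_0 J_notin_I[of "n + 1"] card_I d_ge_2 by simp

lemma homogeneous_stage_0_singletons:
  assumes hom: "homogeneous \<eta> d j (stage 0) C"
  shows "\<forall>i\<in>{1..d}. \<exists>x. C i = {x}"
proof -
  have col: "colouring d (stage 0) C" and at_root: "homogeneous_at \<eta> d (stage 0) C (0, 0)"
    using hom root_dyadic by (simp_all add: homogeneous_iff)
  have "card (C i) \<le> 1" if "i \<in> {1..d}" for i
  proof -
    have "restr (C i) (0, 0) = C i"
      using colouring_subset[OF col that] stage_Dlev by (intro restr_root) blast
    then show ?thesis
      using homogeneous_at_small[OF at_root _ that] restr_root[OF stage_Dlev, of 0] card_stage_0 by simp
  qed
  then show ?thesis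
    using colouring_singletons[OF _ col card_stage_0] by simp
qed

lemma homogeneous_stage_0_canonical:
  assumes hom: "homogeneous \<eta> d j (stage 0) C"
  shows "\<exists>c. canonical 0 C c"
proof -
  have col: "colouring d (stage 0) C"
    using hom by (simp add: homogeneous_iff)
  note singletons = homogeneous_stage_0_singletons[OF hom]
  have "J (n + 1) \<in> (\<Union>i\<in>{1..d}. C i)"
    using col stage_0 by (simp add: colouring_def)
  then obtain c where c: "c \<in> {1..d}" "J (n + 1) \<in> C c"
    by blast
  then have "C c = J ` {n - 0 + 1..n + 1}"
    using singletons by fastforce
  moreover have "\<exists>p\<in>{1..d - 1}. C i = {I p}" if i: "i \<in> {1..d} - {c}" for i
  proof -
    obtain x where x: "C i = {x}"
      using singletons i by blast
    then have "x \<in> stage 0" "x \<noteq> J (n + 1)"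
      using colouring_subset[OF col] colouring_disjoint[OF col _ c(1)] c(2) i by blast+
    then show ?thesis
      using x stage_0 by auto
  qed
  ultimately show ?thesis
    using col c(1) by (intro exI[of _ c]) (simp add: canonical_def)
qed

lemma card_restr_stage_next_L:
  assumes m: "m \<in> {1..n}"
  shows "card (restr (stage m) (L (n - m + 2))) \<le> d"
proof -
  have "restr (stage m) (L (n - m + 2)) \<subseteq> insert (J (n - m + 1)) (I ` {1..d - 1})"
  proof
    fix x assume x: "x \<in> restr (stage m) (L (n - m + 2))"
    show "x \<in> insert (J (n - m + 1)) (I ` {1..d - 1})"
    proof (cases "x \<in> I ` {1..d - 1}")
      case False
      then obtain q where q: "q \<in> {n - m + 1..n + 1}" "x = J q"
        using x by (auto simp: restr_def stage_def)
      have "q = n - m + 1"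
        using J_not_dsub_L[of q "n - m + 2"] q x m by (force simp: restr_def)
      then show ?thesis
        using q by simp
    qed simp
  qed
  then have "card (restr (stage m) (L (n - m + 2))) \<le> card (insert (J (n - m + 1)) (I ` {1..d - 1}))"
    by (simp add: card_mono)
  also have "\<dots> \<le> d"
    using card_insert_le_m1[of d "I ` {1..d - 1}"] card_I d_ge_2 by simp
  finally show ?thesis .
qed

lemma homogeneous_extension_J_colour:
  assumes m: "m \<in> {1..n}" and can: "canonical (m - 1) C c"
    and hom: "homogeneous \<eta> d j (stage m) C'" and ext: "extends_col d C C'"
    and i: "i \<in> {1..d}" "J (n - m + 1) \<in> C' i"
  shows "i = c"
proof (rule ccontr)
  assume "i \<noteq> c"
  then obtain p where p: "p \<in> {1..d - 1}" "C i = {I p}"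
    using canonicalD(4)[OF can] i(1) by blast
  define K where "K = L (n - m + 2)"
  have K: "K \<in> dyadic_intervals" "fst K \<le> j"
    using L_dyadic[of "n - m + 2"] m unfolding K_def by auto
  have "homogeneous_at \<eta> d (stage m) C' K"
    using hom K by (simp add: homogeneous_iff)
  moreover have "card (restr (stage m) K) \<le> d"
    using card_restr_stage_next_L[OF m] by (simp add: K_def)
  ultimately have "card (restr (C' i) K) \<le> 1"
    using homogeneous_at_small i(1) by blast
  moreover have "I p \<in> C' i"
    using ext i(1) p(2) unfolding extends_col_def by blast
  then have "{I p, J (n - m + 1)} \<subseteq> restr (C' i) K"
    using p i I_dsub_L[of p "n - m + 2"] J_dsub_L[of "n - m + 1" "n - m + 2"] m
    by (auto simp: K_def restr_def)
  moreover have "C' i \<subseteq> stage m"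
    using hom colouring_subset[OF _ i(1)] by (simp add: homogeneous_iff)
  then have "restr (C' i) K \<subseteq> stage m"
    by (auto simp: restr_def)
  then have "finite (restr (C' i) K)"
    using finite_subset finite_stage by metis
  moreover have "I p \<noteq> J (n - m + 1)"
    using J_notin_I[of "n - m + 1"] imageI[OF p(1), of I] m by auto
  ultimately show False
    using card_mono[of "restr (C' i) K" "{I p, J (n - m + 1)}"] by simp
qed

lemma homogeneous_extension_forced:
  assumes m: "m \<in> {1..n}" and can: "canonical (m - 1) C c"
    and hom: "homogeneous \<eta> d j (stage m) C'" and ext: "extends_col d C C'"
  shows "\<forall>i\<in>{1..d}. C' i = (C(c := insert (J (n - m + 1)) (C c))) i"
proof -
  have col': "colouring d (insert (J (n - m + 1)) (stage (m - 1))) C'"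
    using hom stage_step(1)[OF m] by (simp add: homogeneous_iff)
  then have "J (n - m + 1) \<in> (\<Union>i\<in>{1..d}. C' i)"
    by (simp add: colouring_def)
  then obtain i where i: "i \<in> {1..d}" "J (n - m + 1) \<in> C' i"
    by blast
  then have "J (n - m + 1) \<in> C' c"
    using homogeneous_extension_J_colour[OF m can hom ext] by simp
  then show ?thesis
    using colouring_insert_unique[OF canonicalD(1)[OF can] col' ext stage_step(2)[OF m] canonicalD(2)[OF can]]
    by simp
qed

lemma homogeneous_extension_canonical:
  assumes "m \<in> {1..n}" "canonical (m - 1) C c"
    and "homogeneous \<eta> d j (stage m) C'" "extends_col d C C'"
  shows "canonical m C' c"
  by (rule canonical_cong[OF canonical_insert[OF assms(1,2)] homogeneous_extension_forced[OF assms]])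

lemma stage_chain_canonical:
  assumes sc: "stage_chain \<eta> d j stage Cs k" and "k \<le> n" and "m \<le> k"
  shows "\<exists>c. canonical m (Cs m) c"
  using assms(3)
proof (induction m)
  case 0
  then show ?case
    using sc homogeneous_stage_0_canonical[of \<eta> "Cs 0"] by (simp add: stage_chain_def)
next
  case (Suc m)
  then obtain c where "canonical (Suc m - 1) (Cs m) c"
    by auto
  moreover have "\<forall>m\<in>{1..k}. homogeneous \<eta> d j (stage m) (Cs m) \<and> extends_col d (Cs (m - 1)) (Cs m)"
    using sc by (simp add: stage_chain_def)
  from bspec[OF this, of "Suc m"]
  have "homogeneous \<eta> d j (stage (Suc m)) (Cs (Suc m)) \<and> extends_col d (Cs (Suc m - 1)) (Cs (Suc m))"
    using Suc.prems by simp
  ultimately have "canonical (Suc m) (Cs (Suc m)) c"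
    using homogeneous_extension_canonical[of "Suc m" "Cs m" c] Suc.prems assms(2) by auto
  then show ?case
    by blast
qed

definition initial_colouring :: "nat \<Rightarrow> dyadic set" where
  "initial_colouring i = (if i = d then {J (n + 1)} else {I i})"

lemma canonical_initial_colouring: "canonical 0 initial_colouring d"
proof -
  have "{1..d} = insert d {1..d - 1}"
    using d_ge_2 by auto
  moreover have "(\<Union>i\<in>{1..d - 1}. initial_colouring i) = I ` {1..d - 1}"
    by (auto simp: initial_colouring_def)
  ultimately have "(\<Union>i\<in>{1..d}. initial_colouring i) = stage 0"
    unfolding stage_0 by (simp only: UN_insert) (simp add: initial_colouring_def)
  moreover have "initial_colouring i \<inter> initial_colouring i' = {}"
    if "i \<in> {1..d}" "i' \<in> {1..d}" "i \<noteq> i'" for i i'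
  proof -
    have "i \<noteq> d \<Longrightarrow> i \<in> {1..d - 1}" "i' \<noteq> d \<Longrightarrow> i' \<in> {1..d - 1}"
      using that by auto
    then show ?thesis
      using that J_notin_I[of "n + 1"] inj_on_eq_iff[OF I_inj, of i i'] unfolding initial_colouring_def
      by (cases "i = d"; cases "i' = d") force+
  qed
  ultimately have "colouring d (stage 0) initial_colouring"
    by (simp add: colouring_def)
  moreover have "\<forall>i\<in>{1..d} - {d}. \<exists>p\<in>{1..d - 1}. initial_colouring i = {I p}"
    by (force simp: initial_colouring_def)
  ultimately show ?thesis
    using d_ge_2 by (simp add: canonical_def initial_colouring_def)
qed

lemma homogeneous_colouring_stage_0_unique:
  fixes \<eta> :: real
  assumes "0 \<le> \<eta>" "\<eta> * n \<le> 1"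
  shows "\<exists>C. homogeneous \<eta> d j (stage 0) C \<and>
    (\<forall>C'. homogeneous \<eta> d j (stage 0) C' \<longrightarrow> perm_equiv d C C')"
proof (intro exI conjI allI impI)
  show hom: "homogeneous \<eta> d j (stage 0) initial_colouring"
    using canonical_homogeneous[OF canonical_initial_colouring _ assms] n_ge_1 by simp
  fix C' assume hom': "homogeneous \<eta> d j (stage 0) C'"
  show "perm_equiv d initial_colouring C'"
    using perm_equiv_singleton_colourings[of d "stage 0"]
      homogeneous_stage_0_singletons[OF hom] homogeneous_stage_0_singletons[OF hom'] hom hom'
    by (simp add: homogeneous_iff)
qed

lemma homogeneous_extension_unique:
  fixes \<eta> :: real
  assumes k: "k \<in> {1..n - 1}" and sc: "stage_chain \<eta> d j stage Cs (k - 1)"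
    and \<eta>: "0 \<le> \<eta>" "\<eta> * n \<le> 1"
  shows "\<exists>C. homogeneous \<eta> d j (stage k) C \<and> extends_col d (Cs (k - 1)) C \<and>
    (\<forall>C'. homogeneous \<eta> d j (stage k) C' \<and> extends_col d (Cs (k - 1)) C' \<longrightarrow>
      (\<forall>i\<in>{1..d}. C' i = C i))"
proof -
  have "k - 1 \<le> n"
    using k by auto
  then obtain c where can: "canonical (k - 1) (Cs (k - 1)) c"
    using stage_chain_canonical[OF sc _ order_refl] by blast
  define C where "C = (Cs (k - 1))(c := insert (J (n - k + 1)) (Cs (k - 1) c))"
  have k': "k \<in> {1..n}"
    using k by auto
  have "homogeneous \<eta> d j (stage k) C"
    using canonical_homogeneous[OF canonical_insert[OF k' can] _ \<eta>] k unfolding C_def by auto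
  moreover have "extends_col d (Cs (k - 1)) C"
    by (auto simp: C_def extends_col_def)
  ultimately show ?thesis
    using homogeneous_extension_forced[OF k' can] unfolding C_def by blast
qed

lemma no_homogeneous_extension_at_n:
  fixes \<eta> :: real
  assumes sc: "stage_chain \<eta> d j stage Cs (n - 1)" and \<eta>: "1 < \<eta> * (n + 1)"
  shows "\<not> (\<exists>C. homogeneous \<eta> d j (stage n) C \<and> extends_col d (Cs (n - 1)) C)"
proof
  assume "\<exists>C. homogeneous \<eta> d j (stage n) C \<and> extends_col d (Cs (n - 1)) C"
  then obtain C where hom: "homogeneous \<eta> d j (stage n) C" and ext: "extends_col d (Cs (n - 1)) C"
    by blast
  obtain c where "canonical (n - 1) (Cs (n - 1)) c"
    using stage_chain_canonical[OF sc _ order_refl] by auto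
  then have "canonical n C c"
    using homogeneous_extension_canonical[OF _ _ hom ext] n_ge_1 by simp
  then show False
    using canonical_not_homogeneous[OF _ \<eta>] hom by simp
qed

end

theorem proposition3p1:
  fixes a n j :: nat and L I J :: "nat \<Rightarrow> dyadic"
    and d :: nat and \<eta> :: real and Cc :: "nat \<Rightarrow> dyadic set"
  defines "d \<equiv> 2 ^ a"
    and "\<eta> \<equiv> 1 / real n"
    and "Cc \<equiv> (\<lambda>k. I ` {1..d - 1} \<union> J ` {n - k + 1..n + 1})"
  assumes "a \<ge> 1" and "n \<ge> 1" and "j \<ge> n + a + 1"
    and "\<forall>i\<in>{1..n + 2}. L i \<in> Dlev (j + 1 - a - i)"
    and "\<forall>i\<in>{1..n + 1}. dsub (L i) (L (i + 1))"
    and "inj_on I {1..d - 1}"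
    and "\<forall>i\<in>{1..d - 1}. I i \<in> Dlev j \<and> dsub (I i) (L 1)"
    and "\<forall>i\<in>{1..n + 1}. J i \<in> Dlev j \<and> dsub (J i) (brother (L i))"
  shows "(\<forall>k\<in>{1..n}. Cc (k - 1) \<subseteq> Cc k)
    \<and> (\<exists>C. homogeneous \<eta> d j (Cc 0) C \<and>
          (\<forall>C'. homogeneous \<eta> d j (Cc 0) C' \<longrightarrow> perm_equiv d C C'))
    \<and> (\<forall>k\<in>{1..n - 1}. \<forall>Cs. stage_chain \<eta> d j Cc Cs (k - 1) \<longrightarrow>
          (\<exists>C. homogeneous \<eta> d j (Cc k) C \<and> extends_col d (Cs (k - 1)) C \<and>
             (\<forall>C'. homogeneous \<eta> d j (Cc k) C' \<and> extends_col d (Cs (k - 1)) C'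
                \<longrightarrow> (\<forall>i\<in>{1..d}. C' i = C i))))
    \<and> (\<forall>Cs. stage_chain \<eta> d j Cc Cs (n - 1) \<longrightarrow>
          \<not> (\<exists>C. homogeneous \<eta> d j (Cc n) C \<and> extends_col d (Cs (n - 1)) C))"
proof -
  have "d \<ge> 2"
    using \<open>a \<ge> 1\<close> unfolding d_def by (cases a) auto
  then interpret staircase a n j d L I J
    using assms(4-) by unfold_locales
  have \<eta>: "0 \<le> \<eta>" "\<eta> * n \<le> 1" "1 < \<eta> * (n + 1)"
    using \<open>n \<ge> 1\<close> by (simp_all add: \<eta>_def field_simps)
  have "Cc = stage"
    by (simp add: Cc_def stage_def fun_eq_iff)
  then show ?thesis
    using stage_mono homogeneous_colouring_stage_0_unique[OF \<eta>(1,2)]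
      homogeneous_extension_unique[OF _ _ \<eta>(1,2)] no_homogeneous_extension_at_n[OF _ \<eta>(3)]
    by (intro conjI) simp_all
qed

end
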